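(* Let $c,d>0$, $g(x)=xF(c,d;c+d;x)$ for $x\in(0,1)$, let $0<a<1<b$, and set $\varphi(y)=\max\{y^a,y^b\}$ and $\varphi^{-1}(y)=\min\{y^{1/a},y^{1/b}\}$ for $y>0$. Let $\beta\in(0,1)$ be the unique solution of $$g\!\left(\frac{\varphi^{-1}(x/(1-x))}{1+\varphi^{-1}(x/(1-x))}\right)=1.$$ Put $a_0=\frac{cd}{c+d}$, $h=\frac{a_0^2}{c+d+1}$, $c_0=1-\frac{1}{2\log 2}$, $c_1=\frac{1}{\log 2}-1$. Then (1) if $(a_0-1)/h\le c_0$, then $\beta>1/2$; (2) if $(a_0-1)/h\ge c_1$, then $\beta<1/2$.
   Context: $F(a,b;c;x)$ is the Gaussian hypergeometric function $\sum_{n\ge0}\frac{(a)_n(b)_n}{(c)_n}\frac{x^n}{n!}$ ($|x|<1$), with $(a)_n=a(a+1)\cdots(a+n-1)$, $(a)_0=1$. *)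

theory Defs
  imports Complex_Main
begin

text \<open>Gaussian hypergeometric function F(a,b;c;x), as a power series (meant for |x| < 1).\<close>
definition hyp2F1 :: "real \<Rightarrow> real \<Rightarrow> real \<Rightarrow> real \<Rightarrow> real" where
  "hyp2F1 a b c x =
     (\<Sum>n. pochhammer a n * pochhammer b n / pochhammer c n * x ^ n / fact n)"

definition gfun :: "real \<Rightarrow> real \<Rightarrow> real \<Rightarrow> real" where
  "gfun c d x = x * hyp2F1 c d (c + d) x"

definition phi :: "real \<Rightarrow> real \<Rightarrow> real \<Rightarrow> real" where
  "phi a b y = max (y powr a) (y powr b)"

definition phi_inv :: "real \<Rightarrow> real \<Rightarrow> real \<Rightarrow> real" where
  "phi_inv a b y = min (y powr (1 / a)) (y powr (1 / b))"

definition beta_eq :: "real \<Rightarrow> real \<Rightarrow> real \<Rightarrow> real \<Rightarrow> real \<Rightarrow> bool" where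
  "beta_eq c d a b x =
     (let u = phi_inv a b (x / (1 - x)) in gfun c d (u / (1 + u)) = 1)"

end

theory Submission
  imports Defs "HOL-Analysis.Harmonic_Numbers"
begin

text \<open>
  Write a = cd/(c+d) and p = c+d.  The Taylor coefficients K_n of F(c,d;c+d;x) depend only
  on (a,p): K_0 = 1 and K_{n+1} = K_n (n + ap/(p+n))/(n+1).  Let F(z) = sum K_n z^n.

  If beta solves the defining equation, then z = u/(1+u) with
  u = phi^{-1}(beta/(1-beta)) satisfies z F(z) = 1, and z lies on the same side of 1/2 as
  beta.  As z F(z) is increasing, F(1/2) < 2 gives beta > 1/2 and F(1/2) > 2 gives beta < 1/2.

  Comparison sequence.  B_n(e,eta) = 1 + e H_n - eta (n - H_n) (H_n harmonic numbers) has
  sum B_n/2^n = 2 + 2e ln 2 - eta (2 - 2 ln 2), from sum H_n/2^n = 2 ln 2 and sum n/2^n = 2.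

  Part (2).  With e = a-1, h = a^2/(p+1), eta = max(h,e), induction gives K_n >= B_n(e,eta);
  the hypothesis makes the comparison sum >= 2, and K_2 > B_2 makes F(1/2) > 2.

  If a <= 1 then F(1/2) < 1 + a <= 2.  If a > 1, the hypothesis (with ln 2 <= 0.69324)
  and p >= 4a force a <= 1.0605 and (a-1)p < 1, so the K_n decrease from n = 1 and F(1/2) is
  below a truncation plus a geometric tail.  For p >= 20 this truncation is bounded by that of
  B_n(e, 661/269 e), which equals 2; for p <= 20 by exact rational values on a finite grid,
  using monotonicity of the K_n in (a,p).
\<close>

text \<open>The ratio of consecutive Taylor coefficients of F(c,d;c+d;x), written in terms of
  a = cd/(c+d) and p = c+d: (c+n)(d+n)/((c+d+n)(n+1)) = (n + ap/(p+n))/(n+1).\<close>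
definition hg_ratio :: "real \<Rightarrow> real \<Rightarrow> nat \<Rightarrow> real" where
  "hg_ratio a p n = (real n + a * p / (p + real n)) / (real n + 1)"

fun hg_coeff :: "real \<Rightarrow> real \<Rightarrow> nat \<Rightarrow> real" where
  "hg_coeff a p 0 = 1"
| "hg_coeff a p (Suc n) = hg_coeff a p n * hg_ratio a p n"

definition hg_series :: "real \<Rightarrow> real \<Rightarrow> real \<Rightarrow> real" where
  "hg_series a p z = (\<Sum>n. hg_coeff a p n * z ^ n)"

lemma hg_ratio_pos: "a > 0 \<Longrightarrow> p > 0 \<Longrightarrow> hg_ratio a p n > 0"
  unfolding hg_ratio_def by (simp add: add_nonneg_pos)

lemma hg_coeff_pos: "a > 0 \<Longrightarrow> p > 0 \<Longrightarrow> hg_coeff a p n > 0"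
  by (induction n) (simp_all add: hg_ratio_pos)

lemma hg_ratio_le_one:
  assumes "p > 0" "(a - 1) * p \<le> real n" shows "hg_ratio a p n \<le> 1"
proof -
  have "a * p \<le> p + real n" using assms by (simp add: algebra_simps)
  then have "a * p / (p + real n) \<le> 1" using assms by (simp add: divide_le_eq)
  then show ?thesis unfolding hg_ratio_def by (simp add: divide_le_eq)
qed

lemma hg_ratio_less_one:
  assumes "p > 0" "(a - 1) * p < real n" shows "hg_ratio a p n < 1"
proof -
  have "a * p < p + real n" using assms by (simp add: algebra_simps)
  then have "a * p / (p + real n) < 1" using assms by (simp add: divide_less_eq)
  then show ?thesis unfolding hg_ratio_def by (simp add: divide_less_eq)
qed

lemma hg_ratio_mono:
  assumes "0 < a" "a \<le> a'" "0 < p" "p \<le> p'"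
  shows "hg_ratio a p n \<le> hg_ratio a' p' n"
proof -
  have "p / (p + real n) \<le> p' / (p' + real n)"
    using assms by (simp add: field_simps mult_right_mono)
  then have "a * (p / (p + real n)) \<le> a' * (p' / (p' + real n))"
    using assms by (intro mult_mono) auto
  then show ?thesis unfolding hg_ratio_def by (intro divide_right_mono) auto
qed

lemma hg_coeff_mono:
  assumes "0 < a" "a \<le> a'" "0 < p" "p \<le> p'"
  shows "hg_coeff a p n \<le> hg_coeff a' p' n"
proof (induction n)
  case (Suc n)
  then show ?case
    using hg_ratio_mono[OF assms, of n] hg_ratio_pos[of a p n] hg_coeff_pos[of a p n] assms
    by (auto intro!: mult_mono)
qed simp

lemma hg_ratio_pochhammer:
  assumes "c > 0" "d > 0"
  shows "(c + real n) * (d + real n) / ((c + d + real n) * (real n + 1))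
           = hg_ratio (c * d / (c + d)) (c + d) n"
proof -
  have cd: "c * d / (c + d) * (c + d) = c * d" using assms by simp
  have "(c + real n) * (d + real n) = real n * ((c + d) + real n) + c * d"
    by (simp add: algebra_simps)
  then show ?thesis using assms unfolding hg_ratio_def cd by (simp add: field_simps)
qed

lemma hg_coeff_pochhammer:
  assumes "c > 0" "d > 0"
  shows "pochhammer c n * pochhammer d n / pochhammer (c + d) n / fact n
           = hg_coeff (c * d / (c + d)) (c + d) n"
proof (induction n)
  case (Suc n)
  have "pochhammer (c + d) n > 0" using assms by (intro pochhammer_pos) simp
  then have "pochhammer c (Suc n) * pochhammer d (Suc n) / pochhammer (c + d) (Suc n) / fact (Suc n)
      = (pochhammer c n * pochhammer d n / pochhammer (c + d) n / fact n) *
        ((c + real n) * (d + real n) / ((c + d + real n) * (real n + 1)))"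
    using assms by (simp add: pochhammer_Suc field_simps)
  also have "\<dots> = hg_coeff (c * d / (c + d)) (c + d) (Suc n)"
    unfolding Suc hg_ratio_pochhammer[OF assms] by simp
  finally show ?case .
qed simp

lemma gfun_eq_hg_series:
  assumes "c > 0" "d > 0"
  shows "gfun c d x = x * hg_series (c * d / (c + d)) (c + d) x"
proof -
  have "pochhammer c n * pochhammer d n / pochhammer (c + d) n * x ^ n / fact n
        = hg_coeff (c * d / (c + d)) (c + d) n * x ^ n" for n
  proof -
    have "pochhammer c n * pochhammer d n / pochhammer (c + d) n * x ^ n / fact n
          = (pochhammer c n * pochhammer d n / pochhammer (c + d) n / fact n) * x ^ n"
      by simp
    then show ?thesis by (simp only: hg_coeff_pochhammer[OF assms])
  qed
  then show ?thesis unfolding gfun_def hyp2F1_def hg_series_def by simp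
qed

text \<open>Convergence on [0,1) follows by the ratio test, as the ratio is at most 1 + a/(n+1).\<close>
lemma hg_ratio_le:
  assumes "a > 0" "p > 0" shows "hg_ratio a p n \<le> 1 + a / (real n + 1)"
proof -
  have "a * p / (p + real n) \<le> a" using assms by (simp add: field_simps mult_left_mono)
  then have "hg_ratio a p n \<le> (real n + 1 + a) / (real n + 1)"
    unfolding hg_ratio_def by (intro divide_right_mono) auto
  also have "\<dots> = 1 + a / (real n + 1)" by (simp add: field_simps)
  finally show ?thesis .
qed

lemma hg_coeff_summable:
  assumes "a > 0" "p > 0" "0 \<le> z" "z < 1"
  shows "summable (\<lambda>n. hg_coeff a p n * z ^ n)"
proof (rule summable_ratio_test[where c = "(1 + z) / 2" and N = "nat \<lceil>2 * a / (1 - z)\<rceil>"])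
  fix n assume "nat \<lceil>2 * a / (1 - z)\<rceil> \<le> n"
  then have small: "a / (real n + 1) \<le> (1 - z) / 2"
    using assms by (simp add: field_simps)
  have "hg_ratio a p n \<le> 1 + (1 - z) / 2" using hg_ratio_le[OF assms(1,2), of n] small by linarith
  then have "z * hg_ratio a p n \<le> z * (1 + (1 - z) / 2)"
    using assms by (intro mult_left_mono) auto
  also have "\<dots> \<le> (1 + z) / 2"
  proof -
    have "z * ((1 - z) / 2) \<le> (1 - z) / 2" using assms by (intro mult_left_le_one_le) auto
    then show ?thesis by (simp add: distrib_left)
  qed
  finally have ratio: "z * hg_ratio a p n \<le> (1 + z) / 2" .
  have nonneg: "hg_coeff a p n * z ^ n \<ge> 0"
    using hg_coeff_pos[OF assms(1,2), of n] assms by simp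
  have "norm (hg_coeff a p (Suc n) * z ^ Suc n) = (hg_coeff a p n * z ^ n) * (z * hg_ratio a p n)"
    using hg_coeff_pos[OF assms(1,2), of n] hg_ratio_pos[OF assms(1,2), of n] assms
    by (simp add: abs_mult)
  also have "\<dots> \<le> (hg_coeff a p n * z ^ n) * ((1 + z) / 2)"
    using ratio nonneg by (rule mult_left_mono)
  also have "\<dots> = (1 + z) / 2 * norm (hg_coeff a p n * z ^ n)"
    using nonneg by simp
  finally show "norm (hg_coeff a p (Suc n) * z ^ Suc n) \<le> (1 + z) / 2 * norm (hg_coeff a p n * z ^ n)" .
qed (use assms in simp)

lemma hg_series_nonneg:
  "a > 0 \<Longrightarrow> p > 0 \<Longrightarrow> 0 \<le> z \<Longrightarrow> z < 1 \<Longrightarrow> 0 \<le> hg_series a p z"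
  unfolding hg_series_def using hg_coeff_summable[of a p z] hg_coeff_pos[of a p]
  by (intro suminf_nonneg) (auto simp: less_imp_le)

text \<open>z F(z) is increasing on [0,1): this is what turns the equation z F(z) = 1 into a
  comparison of F(1/2) with 2.\<close>
lemma hg_series_scaled_mono:
  assumes "a > 0" "p > 0" "0 \<le> z1" "z1 \<le> z2" "z2 < 1"
  shows "z1 * hg_series a p z1 \<le> z2 * hg_series a p z2"
proof (rule mult_mono)
  show "hg_series a p z1 \<le> hg_series a p z2"
    unfolding hg_series_def using assms hg_coeff_summable[OF assms(1,2)] hg_coeff_pos[OF assms(1,2)]
    by (intro suminf_le mult_left_mono power_mono) (auto intro: less_imp_le)
qed (use assms hg_series_nonneg in auto)

lemma phi_inv_le_one: "0 < y \<Longrightarrow> y \<le> 1 \<Longrightarrow> 0 < a \<Longrightarrow> phi_inv a b y \<le> 1"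
  unfolding phi_inv_def by (simp add: min_le_iff_disj powr_le1)

lemma phi_inv_ge_one: "1 \<le> y \<Longrightarrow> 0 < a \<Longrightarrow> 0 < b \<Longrightarrow> 1 \<le> phi_inv a b y"
  unfolding phi_inv_def by (simp add: ge_one_powr_ge_zero)

lemma beta_eq_point:
  assumes "c > 0" "d > 0" "0 < a" "0 < b" "\<beta> \<in> {0<..<1}" "beta_eq c d a b \<beta>"
  obtains z where "0 < z" "z < 1" "z * hg_series (c * d / (c + d)) (c + d) z = 1"
    and "\<beta> \<le> 1/2 \<Longrightarrow> z \<le> 1/2" and "1/2 \<le> \<beta> \<Longrightarrow> 1/2 \<le> z"
proof -
  define y where "y = \<beta> / (1 - \<beta>)"
  define u where "u = phi_inv a b y"
  have y0: "y > 0" using assms(5) unfolding y_def by simp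
  have u0: "u > 0" unfolding u_def phi_inv_def using y0 by simp
  have "gfun c d (u / (1 + u)) = 1"
    using assms(6) unfolding beta_eq_def Let_def y_def[symmetric] u_def[symmetric] .
  then have "u / (1 + u) * hg_series (c * d / (c + d)) (c + d) (u / (1 + u)) = 1"
    using gfun_eq_hg_series[OF assms(1,2)] by simp
  moreover have "u \<le> 1" if "\<beta> \<le> 1/2"
    unfolding u_def using that assms(3,5) y0 by (intro phi_inv_le_one) (auto simp: y_def field_simps)
  moreover have "1 \<le> u" if "1/2 \<le> \<beta>"
    unfolding u_def using that assms(3-5) by (intro phi_inv_ge_one) (auto simp: y_def field_simps)
  ultimately show ?thesis using u0 by (intro that[of "u / (1 + u)"]) (auto simp: field_simps)
qed

lemma beta_gt_half:
  assumes "c > 0" "d > 0" "0 < a" "0 < b" "\<beta> \<in> {0<..<1}" "beta_eq c d a b \<beta>"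
    and "hg_series (c * d / (c + d)) (c + d) (1/2) < 2"
  shows "\<beta> > 1/2"
proof (rule ccontr)
  assume "\<not> \<beta> > 1/2"
  then obtain z where "0 < z" "z \<le> 1/2" "z * hg_series (c * d / (c + d)) (c + d) z = 1"
    using beta_eq_point[OF assms(1-6)] by (metis linorder_not_less)
  moreover have "z * hg_series (c * d / (c + d)) (c + d) z
                 \<le> 1/2 * hg_series (c * d / (c + d)) (c + d) (1/2)"
    using calculation assms by (intro hg_series_scaled_mono) auto
  ultimately show False using assms(7) by simp
qed

lemma beta_lt_half:
  assumes "c > 0" "d > 0" "0 < a" "0 < b" "\<beta> \<in> {0<..<1}" "beta_eq c d a b \<beta>"
    and "hg_series (c * d / (c + d)) (c + d) (1/2) > 2"
  shows "\<beta> < 1/2"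
proof (rule ccontr)
  assume "\<not> \<beta> < 1/2"
  then obtain z where "z < 1" "1/2 \<le> z" "z * hg_series (c * d / (c + d)) (c + d) z = 1"
    using beta_eq_point[OF assms(1-6)] by (metis linorder_not_less)
  moreover have "1/2 * hg_series (c * d / (c + d)) (c + d) (1/2)
                 \<le> z * hg_series (c * d / (c + d)) (c + d) z"
    using calculation assms by (intro hg_series_scaled_mono) auto
  ultimately show False using assms(7) by simp
qed

text \<open>Power series at 1/2 entering the comparison sums: sum x^n/n = -ln(1-x),
  its Cauchy product with the geometric series, sum H_n x^n = -ln(1-x)/(1-x), and
  sum n x^n = x/(1-x)^2.\<close>
lemma geometric_half_sums: "(\<lambda>n. (1/2::real) ^ n) sums 2"
  using geometric_sums[of "1/2::real"] by simp

lemma inverse_nat_half_sums: "(\<lambda>n. (1/2::real) ^ n / real n) sums ln 2"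
proof -
  have "(\<lambda>n. - ((- (- 1/2)) ^ n) / real n) sums ln (1 + (- 1/2::real))"
    by (rule ln_series') simp
  then have "(\<lambda>n. - ((1/2::real) ^ n / real n)) sums (- ln 2)"
    by (simp add: ln_div)
  then show ?thesis using sums_minus by fastforce
qed
lemma harm_half_sums: "(\<lambda>n. harm n * (1/2::real) ^ n) sums (2 * ln 2)"
proof -
  have conv: "(\<Sum>i\<le>n. (1/2::real) ^ i / real i * (1/2) ^ (n - i)) = harm n * (1/2) ^ n" for n
  proof -
    have "(\<Sum>i\<le>n. (1/2::real) ^ i / real i * (1/2) ^ (n - i))
          = (\<Sum>i\<in>{1..n}. (1/2::real) ^ i / real i * (1/2) ^ (n - i))"
      by (rule sum.mono_neutral_right) auto
    also have "\<dots> = (\<Sum>i\<in>{1..n}. inverse (real i) * (1/2) ^ n)"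
    proof (rule sum.cong)
      fix i assume "i \<in> {1..n}"
      then have "(1/2::real) ^ i * (1/2) ^ (n - i) = (1/2) ^ n" by (simp add: power_add[symmetric])
      then show "(1/2::real) ^ i / real i * (1/2) ^ (n - i) = inverse (real i) * (1/2) ^ n"
        by (simp add: field_simps)
    qed simp
    finally show ?thesis unfolding harm_def by (simp add: sum_distrib_right)
  qed
  have "summable (\<lambda>n. norm ((1/2::real) ^ n / real n))"
    using sums_summable[OF inverse_nat_half_sums] by simp
  moreover have "summable (\<lambda>n. norm ((1/2::real) ^ n))"
    using sums_summable[OF geometric_half_sums] by simp
  ultimately have "(\<lambda>n. \<Sum>i\<le>n. (1/2::real) ^ i / real i * (1/2) ^ (n - i))
      sums ((\<Sum>n. (1/2::real) ^ n / real n) * (\<Sum>n. (1/2) ^ n))"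
    by (rule Cauchy_product_sums)
  then show ?thesis unfolding conv
    using inverse_nat_half_sums geometric_half_sums by (simp add: sums_iff mult.commute)
qed

lemma nat_half_sums: "(\<lambda>n. real n * (1/2::real) ^ n) sums 2"
proof -
  have "(\<lambda>n. real (Suc n) * (1/2::real) ^ n) sums 4"
    using geometric_deriv_sums[of "1/2::real"] by (simp add: power2_eq_square)
  from sums_diff[OF this geometric_half_sums] show ?thesis by (simp add: algebra_simps)
qed

lemma ln2_upper: "ln (2::real) \<le> 69324/100000"
  using ln_approx_bounds[of 2 2] by (simp add: eval_nat_numeral)


lemma sums_strict_mono:
  fixes f g :: "nat \<Rightarrow> real"
  assumes "f sums s" "g sums t" "\<And>n. f n \<le> g n" "f i < g i"
  shows "s < t"
proof -
  have "(\<lambda>n. g n - f n) sums (t - s)" using assms(1,2) by (rule sums_diff[rotated])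
  moreover have "0 < (\<Sum>n. g n - f n)"
    using sums_summable[OF calculation] assms(3,4) by (intro suminf_pos2[where i = i]) auto
  ultimately show ?thesis by (simp add: sums_iff)
qed

lemma one_le_harm: "n \<ge> 1 \<Longrightarrow> 1 \<le> (harm n :: real)"
  using harm_mono[of 1 n] by (simp add: harm_def)

lemma harm_le_nat: "harm n \<le> real n"
proof (induction n)
  case (Suc n)
  have "inverse (1 + real n) \<le> 1" by (simp add: inverse_le_1_iff)
  then show ?case using Suc by (simp add: harm_Suc)
qed (simp add: harm_def)

text \<open>It satisfies
  B_{n+1} = B_n + (e - n eta)/(n+1), mimicking K_{n+1} = K_n (n + ap/(p+n))/(n+1)
  with e = a - 1, and its generating function at 1/2 is explicit.\<close>
definition harm_comb :: "real \<Rightarrow> real \<Rightarrow> nat \<Rightarrow> real" where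
  "harm_comb e \<eta> n = 1 + e * harm n - \<eta> * (real n - harm n)"

lemma harm_comb_0 [simp]: "harm_comb e \<eta> 0 = 1"
  by (simp add: harm_comb_def harm_def)

lemma harm_comb_Suc:
  "harm_comb e \<eta> (Suc n) = harm_comb e \<eta> n + (e - real n * \<eta>) / (real n + 1)"
proof -
  have "harm_comb e \<eta> (Suc n) = harm_comb e \<eta> n + e / (real n + 1) - \<eta> * (1 - 1 / (real n + 1))"
    unfolding harm_comb_def harm_Suc by (simp add: algebra_simps inverse_eq_divide)
  also have "1 - 1 / (real n + 1) = real n / (real n + 1)" by (simp add: field_simps)
  finally show ?thesis by (simp add: diff_divide_distrib)
qed

text \<open>As long as e > n eta the increments are positive.\<close>
lemma harm_comb_ge_one:
  assumes "e > real n * \<eta>" "\<eta> \<ge> 0"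
  shows "harm_comb e \<eta> n \<ge> 1"
  using assms(1)
proof (induction n)
  case (Suc n)
  have "real n * \<eta> \<le> real (Suc n) * \<eta>" using assms(2) by (intro mult_right_mono) auto
  then have "(e - real n * \<eta>) / (real n + 1) \<ge> 0" using Suc.prems by simp
  moreover have "harm_comb e \<eta> n \<ge> 1" using Suc \<open>real n * \<eta> \<le> real (Suc n) * \<eta>\<close> by simp
  ultimately show ?case unfolding harm_comb_Suc by linarith
qed simp

lemma harm_comb_half_sums:
  "(\<lambda>n. harm_comb e \<eta> n * (1/2) ^ n) sums (2 + e * (2 * ln 2) - \<eta> * (2 - 2 * ln 2))"
proof -
  have "(\<lambda>n. (1/2::real) ^ n + e * (harm n * (1/2) ^ n) - \<eta> * (real n * (1/2) ^ n - harm n * (1/2) ^ n))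
        sums (2 + e * (2 * ln 2) - \<eta> * (2 - 2 * ln 2))"
    by (intro sums_diff sums_add sums_mult geometric_half_sums harm_half_sums nat_half_sums)
  then show ?thesis by (simp add: harm_comb_def algebra_simps)
qed

text \<open>The polynomial inequality behind one step of the lower bound K_n >= B_n, in the
  variables x = n, H = H_n, m = x - H; the hypothesis eta m <= 1 + eH says B_n >= 0.\<close>
lemma lower_step_core:
  fixes e \<eta> H x :: real
  assumes e0: "e \<ge> 0" and he: "\<eta> \<ge> e" and h0: "\<eta> > 0"
    and H1: "1 \<le> H" and Hx: "H \<le> x" and hm: "\<eta> * (x - H) \<le> 1 + e * H"
  shows "0 \<le> (1 + e)^2 * e^2 * H - e * \<eta> * H * (x - 1) + e * \<eta> * (x - H) * (\<eta> - e - e^2)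
              + x * \<eta>^2 * (2 * x - H - 1)"
proof -
  define m where "m = x - H"
  have m0: "m \<ge> 0" and x1: "x \<ge> 1" unfolding m_def using H1 Hx by auto
  have i1: "x * \<eta>^2 * (2 * x - H - 1) - e * \<eta> * H * (x - 1) \<ge> e * \<eta> * (2 * x - 1) * m"
  proof -
    have q0: "x * (2 * x - H - 1) \<ge> 0" using x1 Hx by simp
    have "x * \<eta> * (2 * x - H - 1) \<ge> x * e * (2 * x - H - 1)"
      using mult_right_mono[OF he q0] by (simp add: algebra_simps)
    then have "\<eta> * (x * \<eta> * (2 * x - H - 1)) \<ge> \<eta> * (x * e * (2 * x - H - 1))"
      using h0 by (intro mult_left_mono) auto
    moreover have "e * \<eta> * (2 * x - 1) * m = \<eta> * (x * e * (2 * x - H - 1)) - e * \<eta> * H * (x - 1)"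
      unfolding m_def by (simp add: algebra_simps)
    moreover have "x * \<eta>^2 * (2 * x - H - 1) = \<eta> * (x * \<eta> * (2 * x - H - 1))"
      by (simp add: power2_eq_square algebra_simps)
    ultimately show ?thesis by linarith
  qed
  have i2: "e * \<eta> * m * (2 * x - 1 + \<eta>) \<ge> 0" using e0 h0 m0 x1 by simp
  have i3: "e * \<eta> * m * (e + e^2) \<le> (1 + e)^2 * e^2 * H"
  proof -
    have ee: "e * (e + e^2) \<ge> 0" using e0 by simp
    have "e * \<eta> * m * (e + e^2) = (e * (e + e^2)) * (\<eta> * m)" by (simp add: algebra_simps)
    also have "\<dots> \<le> (e * (e + e^2)) * ((1 + e) * H)"
      using hm ee H1 e0 unfolding m_def by (intro mult_left_mono) (auto simp: algebra_simps)
    also have "\<dots> = (1 + e)^2 * e^2 * H" by (simp add: algebra_simps power2_eq_square)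
    finally show ?thesis .
  qed
  show ?thesis using i1 i2 i3 unfolding m_def[symmetric] by (simp add: algebra_simps)
qed

text \<open>The same inequality in the form needed: with B = 1 + eH - eta(x - H) >= 0, the
  numerator of B (x + (1+e)p/(p+x)) - ((x+1)B + e - x eta) is nonnegative, provided
  eta >= e and eta (p+1) >= (1+e)^2.\<close>
lemma lower_step_poly:
  fixes e \<eta> p H x :: real
  assumes e0: "e \<ge> 0" and he: "\<eta> \<ge> e" and h0: "\<eta> > 0"
    and hp: "\<eta> * (p + 1) \<ge> (1 + e)^2" and H1: "1 \<le> H" and Hx: "H \<le> x"
    and B0: "1 + e * H - \<eta> * (x - H) \<ge> 0"
  shows "(1 + e * H - \<eta> * (x - H)) * (e * p - x) - (e - x * \<eta>) * (p + x) \<ge> 0"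
proof -
  define X where "X = e^2 * H + \<eta> * x - e * \<eta> * (x - H)"
  have hm: "\<eta> * (x - H) \<le> 1 + e * H" using B0 by simp
  have X0: "X \<ge> 0"
  proof -
    have "e * (\<eta> * (x - H)) \<le> e * (1 + e * H)" using hm e0 by (rule mult_left_mono)
    moreover have "\<eta> * x \<ge> e * 1" using he H1 Hx e0 by (intro mult_mono) auto
    ultimately show ?thesis unfolding X_def by (simp add: algebra_simps power2_eq_square)
  qed
  have "(1 + e)^2 / \<eta> \<le> p + 1" using hp h0 by (simp add: divide_le_eq mult.commute)
  then have pX: "p * X \<ge> ((1 + e)^2 / \<eta> - 1) * X" using X0 by (intro mult_right_mono) auto
  have "\<eta> * (((1 + e)^2 / \<eta> - 1) * X + x * (\<eta> * (2 * x - H) - (1 + e) - e * H))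
     = (1 + e)^2 * e^2 * H - e * \<eta> * H * (x - 1) + e * \<eta> * (x - H) * (\<eta> - e - e^2)
       + x * \<eta>^2 * (2 * x - H - 1)"
    unfolding X_def using h0 by (simp add: field_simps power2_eq_square)
  then have "\<eta> * (((1 + e)^2 / \<eta> - 1) * X + x * (\<eta> * (2 * x - H) - (1 + e) - e * H)) \<ge> 0"
    using lower_step_core[OF e0 he h0 H1 Hx hm] by simp
  then have "((1 + e)^2 / \<eta> - 1) * X + x * (\<eta> * (2 * x - H) - (1 + e) - e * H) \<ge> 0"
    using h0 by (simp add: zero_le_mult_iff)
  moreover have "(1 + e * H - \<eta> * (x - H)) * (e * p - x) - (e - x * \<eta>) * (p + x)
                 = p * X + x * (\<eta> * (2 * x - H) - (1 + e) - e * H)"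
    unfolding X_def by (simp add: algebra_simps power2_eq_square)
  ultimately show ?thesis using pX by simp
qed

lemma harm_comb_step_lower:
  assumes e0: "e \<ge> 0" and he: "\<eta> \<ge> e" and h0: "\<eta> > 0" and p0: "p > 0"
    and hp: "\<eta> * (p + 1) \<ge> (1 + e)^2" and B0: "harm_comb e \<eta> n \<ge> 0"
  shows "harm_comb e \<eta> (Suc n) \<le> harm_comb e \<eta> n * hg_ratio (1 + e) p n"
proof (cases "n = 0")
  case True
  then show ?thesis using p0 by (simp add: hg_ratio_def harm_comb_def harm_def)
next
  case False
  define B where "B = harm_comb e \<eta> n"
  have px: "p + real n > 0" using p0 by simp
  have "(B * (e * p - real n) - (e - real n * \<eta>) * (p + real n)) \<ge> 0"
    using lower_step_poly[OF e0 he h0 hp one_le_harm harm_le_nat, of n] False B0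
    unfolding B_def harm_comb_def by simp
  then have "((real n + 1) * B + e - real n * \<eta>) * (p + real n)
             \<le> B * (real n * (p + real n) + (1 + e) * p)"
    by (simp add: algebra_simps)
  then have "(real n + 1) * B + e - real n * \<eta> \<le> B * (real n * (p + real n) + (1 + e) * p) / (p + real n)"
    using px by (simp add: pos_le_divide_eq)
  also have "\<dots> = B * (real n + (1 + e) * p / (p + real n))"
    using px by (simp add: field_simps)
  finally have "((real n + 1) * B + e - real n * \<eta>) / (real n + 1)
                \<le> B * (real n + (1 + e) * p / (p + real n)) / (real n + 1)"
    by (intro divide_right_mono) auto
  moreover have "harm_comb e \<eta> (Suc n) = ((real n + 1) * B + e - real n * \<eta>) / (real n + 1)"
    unfolding B_def harm_comb_Suc by (simp add: field_simps)
  ultimately show ?thesis unfolding B_def hg_ratio_def by simp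
qed

text \<open>Lower bound K_n(a,p) >= B_n(a-1, eta) whenever eta >= a - 1 and eta (p+1) >= a^2:
  the inequality propagates while B_n >= 0, and once B_n turns negative it stays so.\<close>
lemma hg_coeff_ge_harm_comb:
  assumes a1: "a \<ge> 1" and p0: "p > 0" and h0: "\<eta> > 0" and he: "\<eta> \<ge> a - 1"
    and hp: "\<eta> * (p + 1) \<ge> a^2"
  shows "harm_comb (a - 1) \<eta> n \<le> hg_coeff a p n"
proof (induction n)
  case (Suc n)
  show ?case
  proof (cases "harm_comb (a - 1) \<eta> n \<ge> 0")
    case True
    have "harm_comb (a - 1) \<eta> (Suc n) \<le> harm_comb (a - 1) \<eta> n * hg_ratio a p n"
      using harm_comb_step_lower[of "a - 1" \<eta> p n] assms True by simp
    also have "\<dots> \<le> hg_coeff a p n * hg_ratio a p n"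
      using Suc hg_ratio_pos[of a p n] a1 p0 by (intro mult_right_mono) auto
    finally show ?thesis by simp
  next
    case False
    then have "\<not> a - 1 > real n * \<eta>" using harm_comb_ge_one[of n \<eta> "a - 1"] h0 by auto
    then have "(a - 1 - real n * \<eta>) / (real n + 1) \<le> 0" by (simp add: divide_nonpos_pos)
    then have "harm_comb (a - 1) \<eta> (Suc n) < 0"
      using False unfolding harm_comb_Suc by linarith
    moreover have "hg_coeff a p (Suc n) > 0" using hg_coeff_pos[of a p "Suc n"] a1 p0 by simp
    ultimately show ?thesis by simp
  qed
qed simp

lemma harm_comb_2_less_hg_coeff:
  assumes "a \<noteq> 1" "p > 0" "\<eta> \<ge> a^2 / (p + 1)"
  shows "harm_comb (a - 1) \<eta> 2 < hg_coeff a p 2"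
proof -
  have "hg_coeff a p 2 = a * (1 + a * p / (p + 1)) / 2"
    using assms(2) by (simp add: numeral_2_eq_2 hg_ratio_def)
  moreover have "harm_comb (a - 1) \<eta> 2 = 1 + (a - 1) * (3/2) - \<eta> / 2"
    by (simp add: harm_comb_def harm_def numeral_2_eq_2)
  moreover have "a * (a * p / (p + 1)) = a^2 - a^2 / (p + 1)"
    using assms(2) by (simp add: field_simps power2_eq_square)
  moreover have "(a - 1)^2 > 0" using assms(1) by simp
  ultimately show ?thesis using assms(3) by (simp add: field_simps power2_eq_square)
qed

lemma harm_comb_half_sum_ge_two:
  fixes e h :: real
  assumes "e > 0" "e * ln 2 \<ge> (1 - ln 2) * h"
  shows "2 \<le> 2 + e * (2 * ln 2) - max h e * (2 - 2 * ln 2)"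
proof (cases "h \<le> e")
  case True
  then have "e * (2 * ln 2) - max h e * (2 - 2 * ln 2) = e * (4 * ln 2 - 2)"
    by (simp add: algebra_simps)
  moreover have "e * (4 * ln 2 - 2) \<ge> 0" using assms(1) ln2_ge_two_thirds by simp
  ultimately show ?thesis by simp
next
  case False
  then have "e * (2 * ln 2) - max h e * (2 - 2 * ln 2) = 2 * (e * ln 2 - (1 - ln 2) * h)"
    by (simp add: algebra_simps)
  then show ?thesis using assms(2) by simp
qed

lemma hg_series_half_gt_two:
  assumes a0: "a > 0" and p0: "p > 0"
    and hyp: "(a - 1) / (a^2 / (p + 1)) \<ge> 1 / ln 2 - 1"
  shows "hg_series a p (1/2) > 2"
proof -
  define h where "h = a^2 / (p + 1)"
  define e where "e = a - 1"
  have h0: "h > 0" unfolding h_def using a0 p0 by simp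
  have l0: "ln (2::real) > 0" and l1: "ln (2::real) < 1" using ln_2_less_1 by auto
  have "e / h \<ge> 1 / ln 2 - 1" using hyp unfolding e_def h_def .
  then have eh: "e \<ge> (1 / ln 2 - 1) * h" using h0 by (simp add: pos_le_divide_eq)
  have "(1 / ln 2 - 1) * h > 0" using l0 l1 h0 by (simp add: field_simps)
  then have e0: "e > 0" using eh by linarith
  have "e * ln 2 \<ge> (1 / ln 2 - 1) * h * ln 2" using eh l0 by (intro mult_right_mono) auto
  also have "(1 / ln 2 - 1) * h * ln 2 = (1 - ln 2) * h" using l0 by (simp add: field_simps)
  finally have eh2: "e * ln 2 \<ge> (1 - ln 2) * h" .
  have hp: "max h e * (p + 1) \<ge> a^2"
  proof -
    have "h * (p + 1) \<le> max h e * (p + 1)" using p0 by (intro mult_right_mono) auto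
    then show ?thesis unfolding h_def using p0 by simp
  qed
  have below: "harm_comb e (max h e) n * (1/2) ^ n \<le> hg_coeff a p n * (1/2) ^ n" for n
    using hg_coeff_ge_harm_comb[of a p "max h e" n] hp e0 h0 p0 unfolding e_def
    by (intro mult_right_mono) auto
  have strict: "harm_comb e (max h e) 2 * (1/2) ^ 2 < hg_coeff a p 2 * (1/2) ^ 2"
    using harm_comb_2_less_hg_coeff[of a p "max h e"] e0 p0 unfolding e_def h_def by simp
  have "2 \<le> 2 + e * (2 * ln 2) - max h e * (2 - 2 * ln 2)"
    using harm_comb_half_sum_ge_two[OF e0 eh2] .
  also have "\<dots> < hg_series a p (1/2)"
    unfolding hg_series_def
    using harm_comb_half_sums summable_sums[OF hg_coeff_summable[OF a0 p0, of "1/2"]] below strict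
    by (rule sums_strict_mono) auto
  finally show ?thesis .
qed

text \<open>Upper bounds.  Truncating F_{a,p}(1/2) after N terms and bounding the remaining
  (decreasing) coefficients by K_N gives the majorant
  sum_{n<N} K_n/2^n + 2 K_N/2^N.\<close>
definition tail_bound :: "real \<Rightarrow> real \<Rightarrow> nat \<Rightarrow> real" where
  "tail_bound a p N = (\<Sum>n<N. hg_coeff a p n * (1/2) ^ n) + hg_coeff a p N * (1/2) ^ N * 2"

lemma tail_bound_mono:
  assumes "0 < a" "a \<le> a'" "0 < p" "p \<le> p'"
  shows "tail_bound a p N \<le> tail_bound a' p' N"
  unfolding tail_bound_def using hg_coeff_mono[OF assms]
  by (intro add_mono sum_mono mult_right_mono) auto

lemma hg_coeff_antimono_from:
  assumes "a > 0" "p > 0" "(a - 1) * p \<le> real N"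
  shows "hg_coeff a p (n + N) \<le> hg_coeff a p N"
proof (induction n)
  case (Suc n)
  have "(a - 1) * p \<le> real (n + N)" using assms(3) by simp
  then have "hg_ratio a p (n + N) \<le> 1" by (rule hg_ratio_le_one[OF assms(2)])
  moreover have "hg_coeff a p (n + N) \<ge> 0"
    using hg_coeff_pos[OF assms(1,2)] by (simp add: less_imp_le)
  ultimately have "hg_coeff a p (Suc n + N) \<le> hg_coeff a p (n + N)"
    by (simp add: mult_left_le)
  then show ?case using Suc by simp
qed simp

text \<open>When (a-1)p < 1 the coefficients decrease from n = 1 on, strictly, so every
  truncation N >= 1 gives a strict majorant.\<close>
lemma hg_series_half_lt_tail_bound:
  assumes a0: "a > 0" and p0: "p > 0" and ap: "(a - 1) * p < 1" and N1: "N \<ge> 1"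
  shows "hg_series a p (1/2) < tail_bound a p N"
proof -
  let ?f = "\<lambda>n. hg_coeff a p n * (1/2::real) ^ n"
  have "?f sums hg_series a p (1/2)"
    unfolding hg_series_def using hg_coeff_summable[OF a0 p0] by (simp add: summable_sums)
  then have tail: "(\<lambda>n. ?f (n + N)) sums (hg_series a p (1/2) - (\<Sum>n<N. ?f n))"
    by (rule sums_split_initial_segment)
  have geom: "(\<lambda>n. hg_coeff a p N * (1/2) ^ N * (1/2::real) ^ n) sums (hg_coeff a p N * (1/2) ^ N * 2)"
    using sums_mult[OF geometric_half_sums] by simp
  have le: "?f (n + N) \<le> hg_coeff a p N * (1/2) ^ N * (1/2) ^ n" for n
  proof -
    have "hg_coeff a p (n + N) \<le> hg_coeff a p N"
      using ap N1 by (intro hg_coeff_antimono_from[OF a0 p0]) linarith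
    then have "?f (n + N) \<le> hg_coeff a p N * (1/2) ^ (n + N)"
      by (rule mult_right_mono) simp
    then show ?thesis by (simp add: power_add mult.assoc mult.commute)
  qed
  have "hg_ratio a p N < 1" using ap N1 p0 by (intro hg_ratio_less_one) auto
  then have "hg_coeff a p (Suc N) < hg_coeff a p N"
    using hg_coeff_pos[OF a0 p0, of N] by simp
  then have "?f (1 + N) < hg_coeff a p N * (1/2) ^ (1 + N)"
    by (intro mult_strict_right_mono) auto
  then have lt: "?f (1 + N) < hg_coeff a p N * (1/2) ^ N * (1/2) ^ 1"
    by (simp add: power_add mult.assoc)
  have "hg_series a p (1/2) - (\<Sum>n<N. ?f n) < hg_coeff a p N * (1/2) ^ N * 2"
    using tail geom le lt by (rule sums_strict_mono)
  then show ?thesis unfolding tail_bound_def by simp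
qed

text \<open>Case a <= 1 of part (1): truncating after one term, F(1/2) < 1 + K_1 = 1 + a <= 2.\<close>
lemma hg_series_half_lt_two_small_a:
  assumes "0 < a" "a \<le> 1" "p > 0"
  shows "hg_series a p (1/2) < 2"
proof -
  have "(a - 1) * p \<le> 0" using assms by (intro mult_nonpos_nonneg) auto
  then have "hg_series a p (1/2) < tail_bound a p 1"
    using assms by (intro hg_series_half_lt_tail_bound) auto
  also have "tail_bound a p 1 = 1 + a"
    using assms by (simp add: tail_bound_def hg_ratio_def)
  finally show ?thesis using assms by simp
qed

text \<open>Upper bound K_n(1+e,p) <= B_n(e, kappa e) for n <= 5, kappa = 661/269, when e and ep
  are small.  One step of the induction needs the polynomial Q below to be nonnegative;
  after substituting r = ep and w = e r it is linear in (e, r, w), which is checked for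
  n = 1..4 with the exact harmonic numbers.\<close>
lemma upper_poly_linear:
  fixes x H e r w :: real
  assumes "(x, H) \<in> {(1, 1), (2, 3/2), (3, 11/6), (4, 25/12)}"
    and "0 \<le> e" "e \<le> 3/200" "0 \<le> r" "r \<le> 2872/10000" "0 \<le> w" "w \<le> 2872/10000 * e"
  shows "0 \<le> x + x * e + x * e * H - H * w
              + 661/269 * ((x - H) * w - (x - H) * x * e - x * r - x^2 * e)"
  using assms(1) by (elim insertE emptyE; simp only: prod.inject; elim conjE; hypsubst;
      simp only: power2_eq_square ring_distribs; use assms(2-) in linarith)

lemma harm_values: "harm 1 = (1::real)" "harm 2 = (3/2::real)" "harm 3 = (11/6::real)"
  "harm 4 = (25/12::real)"
  by (simp_all add: harm_def eval_nat_numeral)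

lemma upper_poly_nonneg:
  fixes e p :: real
  assumes "n \<in> {1, 2, 3, 4}" "0 \<le> e" "e \<le> 3/200" "p > 0" "e * p \<le> 2872/10000"
  shows "0 \<le> real n * (1 + e + e * harm n) - e^2 * harm n * p
     + 661/269 * e * ((real n - harm n) * e * p - (real n - harm n) * real n - real n * p - (real n)^2)"
proof -
  have w: "e * (e * p) \<le> 2872/10000 * e" using mult_left_mono[OF assms(5,2)] by (simp add: mult.commute)
  have "(real n, harm n :: real) \<in> {(1, 1), (2, 3/2), (3, 11/6), (4, 25/12)}"
    using assms(1) harm_values by auto
  from upper_poly_linear[OF this assms(2,3) _ assms(5) _ w] assms(2,4)
  have "0 \<le> real n + real n * e + real n * e * harm n - harm n * (e * (e * p))
     + 661/269 * ((real n - harm n) * (e * (e * p)) - (real n - harm n) * real n * e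
                  - real n * (e * p) - (real n)^2 * e)"
    by simp
  also have "\<dots> = real n * (1 + e + e * harm n) - e^2 * harm n * p
     + 661/269 * e * ((real n - harm n) * e * p - (real n - harm n) * real n - real n * p - (real n)^2)"
    by (simp add: field_simps power2_eq_square)
  finally show ?thesis .
qed

text \<open>One step of the upper bound: B_n K_{n+1}/K_n <= B_{n+1} for a = 1 + e, provided the
  polynomial Q is nonnegative (the numerator of the difference).\<close>
lemma harm_comb_step_upper:
  assumes p0: "p > 0" and n0: "n > 0"
    and Q: "0 \<le> real n * (1 + e + e * harm n) - e^2 * harm n * p
      + \<eta> * ((real n - harm n) * e * p - (real n - harm n) * real n - real n * p - (real n)^2)"
  shows "harm_comb e \<eta> n * hg_ratio (1 + e) p n \<le> harm_comb e \<eta> (Suc n)"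
proof -
  define x where "x = real n"
  define B where "B = harm_comb e \<eta> n"
  have x0: "x > 0" and px: "p + x > 0" using n0 p0 unfolding x_def by auto
  have "(x * (p + x) + (1 + e) * p) * B \<le> ((x + 1) * B + e - x * \<eta>) * (p + x)"
    using Q unfolding x_def B_def harm_comb_def by (simp add: algebra_simps power2_eq_square)
  then have "(x * (p + x) + (1 + e) * p) * B / ((p + x) * (x + 1)) \<le> ((x + 1) * B + e - x * \<eta>) / (x + 1)"
    using px x0 by (simp add: divide_simps mult.commute mult.left_commute)
  moreover have "B * hg_ratio (1 + e) p n = (x * (p + x) + (1 + e) * p) * B / ((p + x) * (x + 1))"
    unfolding hg_ratio_def x_def[symmetric] using px by (simp add: field_simps)
  moreover have "harm_comb e \<eta> (Suc n) = ((x + 1) * B + e - x * \<eta>) / (x + 1)"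
    unfolding harm_comb_Suc B_def x_def by (simp add: field_simps)
  ultimately show ?thesis unfolding B_def by simp
qed

lemma hg_coeff_le_harm_comb:
  fixes e p :: real
  assumes e0: "0 \<le> e" and e1: "e \<le> 3/200" and p0: "p > 0" and r1: "e * p \<le> 2872/10000"
  shows "n \<le> 5 \<Longrightarrow> hg_coeff (1 + e) p n \<le> harm_comb e (661/269 * e) n"
proof (induction n)
  case (Suc n)
  show ?case
  proof (cases "n = 0")
    case True
    then show ?thesis using p0 by (simp add: harm_comb_def harm_def hg_ratio_def)
  next
    case False
    then have "n \<in> {1, 2, 3, 4}" using Suc.prems by auto
    then have "harm_comb e (661/269 * e) n * hg_ratio (1 + e) p n \<le> harm_comb e (661/269 * e) (Suc n)"
      using upper_poly_nonneg[OF _ e0 e1 p0 r1] False p0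
      by (intro harm_comb_step_upper) (auto simp: mult.assoc)
    moreover have "hg_coeff (1 + e) p n * hg_ratio (1 + e) p n
                   \<le> harm_comb e (661/269 * e) n * hg_ratio (1 + e) p n"
      using Suc hg_ratio_pos[of "1 + e" p n] e0 p0 by (intro mult_right_mono) auto
    ultimately show ?thesis by simp
  qed
qed simp

text \<open>Case p >= 20 of part (1): then e = a - 1 <= 3/200 and ep <= 0.2872, and the
  truncation after five terms is bounded by that of B_n(e, kappa e), which equals 2
  exactly (kappa = 661/269 is chosen for this).\<close>
lemma tail_bound_large_p:
  assumes a1: "a > 1" and a_le: "a \<le> 10605/10000" and p20: "p \<ge> 20"
    and hyp: "(a - 1) * (p + 1) \<le> 27875/100000 * a^2"
  shows "tail_bound a p 5 \<le> 2"
proof -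
  define e where "e = a - 1"
  have e0: "e \<ge> 0" unfolding e_def using a1 by simp
  have "21 * e \<le> e * (p + 1)" using p20 e0 by (simp add: mult_left_mono mult.commute)
  also have "\<dots> \<le> 27875/100000 * a^2" using hyp unfolding e_def .
  also have "\<dots> \<le> 27875/100000 * (10605/10000)^2"
    using a_le a1 by (intro mult_left_mono power_mono) auto
  finally have e1: "e \<le> 3/200" by (simp add: power2_eq_square)
  have "e * p \<le> e * (p + 1)" using e0 by (simp add: distrib_left)
  also have "\<dots> \<le> 27875/100000 * a^2" using hyp unfolding e_def .
  also have "\<dots> \<le> 27875/100000 * (203/200)^2"
    using e1 a1 unfolding e_def by (intro mult_left_mono power_mono) auto
  finally have r1: "e * p \<le> 2872/10000" by (simp add: power2_eq_square)
  have "tail_bound a p 5 \<le> (\<Sum>n<5. harm_comb e (661/269 * e) n * (1/2) ^ n)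
                           + harm_comb e (661/269 * e) 5 * (1/2) ^ 5 * 2"
    using hg_coeff_le_harm_comb[OF e0 e1 _ r1] p20 unfolding tail_bound_def e_def
    by (intro add_mono sum_mono mult_right_mono) auto
  also have "\<dots> = 2" by (simp add: harm_comb_def harm_altdef eval_nat_numeral field_simps)
  finally show ?thesis .
qed

text \<open>Case p <= 20 of part (1): on each cell [lo, hi] of a partition of a \<in> (1, 1.0605] the
  hypothesis bounds p by some P, and by monotonicity the truncation after eight terms is
  at most its exact rational value at (hi, P), which is < 2.\<close>
lemma tail_bound_cell:
  assumes "lo \<le> a" "a \<le> hi" "1 < lo" "0 < p"
    and hyp: "(a - 1) * (p + 1) \<le> 27875/100000 * a^2"
    and P: "27875/100000 * hi^2 \<le> (lo - 1) * (P + 1)" and val: "tail_bound hi P 8 < 2"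
  shows "tail_bound a p 8 < 2"
proof -
  have "(lo - 1) * (p + 1) \<le> (a - 1) * (p + 1)" using assms by (intro mult_right_mono) auto
  also have "\<dots> \<le> 27875/100000 * a^2" by (rule hyp)
  also have "\<dots> \<le> 27875/100000 * hi^2" using assms by (intro mult_left_mono power_mono) auto
  finally have "p \<le> P" using P assms(3) by (smt (verit) mult_le_cancel_left_pos)
  then have "tail_bound a p 8 \<le> tail_bound hi P 8" using assms by (intro tail_bound_mono) auto
  then show ?thesis using val by simp
qed

lemma tail_bound_small_p:
  assumes a1: "a > 1" and a_le: "a \<le> 10605/10000" and p0: "p > 0" and p20: "p \<le> 20"
    and hyp: "(a - 1) * (p + 1) \<le> 27875/100000 * a^2"
  shows "tail_bound a p 8 < 2"
proof -
  consider "a \<le> 1019/1000" | "1019/1000 \<le> a" "a \<le> 1027/1000"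
    | "1027/1000 \<le> a" "a \<le> 1037/1000" | "1037/1000 \<le> a" "a \<le> 1049/1000"
    | "1049/1000 \<le> a" using a_le by linarith
  then show ?thesis
  proof cases
    case 1
    have "tail_bound a p 8 \<le> tail_bound (1019/1000) 20 8"
      using 1 a1 p0 p20 by (intro tail_bound_mono) auto
    also have "\<dots> < 2" by (simp add: tail_bound_def hg_ratio_def eval_nat_numeral field_simps)
    finally show ?thesis .
  next
    case 2
    show ?thesis by (rule tail_bound_cell[OF 2 _ p0 hyp, of "362/25"])
      (simp_all add: tail_bound_def hg_ratio_def eval_nat_numeral power2_eq_square field_simps)
  next
    case 3
    show ?thesis by (rule tail_bound_cell[OF 3 _ p0 hyp, of "1011/100"])
      (simp_all add: tail_bound_def hg_ratio_def eval_nat_numeral power2_eq_square field_simps)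
  next
    case 4
    show ?thesis by (rule tail_bound_cell[OF 4 _ p0 hyp, of "73/10"])
      (simp_all add: tail_bound_def hg_ratio_def eval_nat_numeral power2_eq_square field_simps)
  next
    case 5
    show ?thesis by (rule tail_bound_cell[OF 5 a_le _ p0 hyp, of "27/5"])
      (simp_all add: tail_bound_def hg_ratio_def eval_nat_numeral power2_eq_square field_simps)
  qed
qed

lemma c0_le_rational: "1 - 1 / (2 * ln 2) \<le> (27875/100000 :: real)"
proof -
  have "(1 - 27875/100000) * (2 * ln 2) \<le> (1::real)" using ln2_upper by simp
  then have "1 - 27875/100000 \<le> 1 / (2 * ln (2::real))" by (simp add: le_divide_eq)
  then show ?thesis by simp
qed

text \<open>For a > 1 the hypothesis of part (1), together with p >= 4a, confines the parameters:
  (a-1)(4a+1) <= 0.27875 a^2 gives a <= 1.0605, and then (a-1)p < 1.\<close>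
lemma part1_parameter_bounds:
  fixes a p :: real
  assumes a1: "a > 1" and p4: "p \<ge> 4 * a"
    and hyp: "(a - 1) * (p + 1) \<le> 27875/100000 * a^2"
  shows "a \<le> 10605/10000" and "(a - 1) * p < 1"
proof -
  show a_le: "a \<le> 10605/10000"
  proof (rule ccontr)
    assume "\<not> a \<le> 10605/10000"
    then have big: "a > 10605/10000" by simp
    have "(a - 1) * (4 * a + 1) \<le> (a - 1) * (p + 1)" using a1 p4 by (intro mult_left_mono) auto
    then have "(4 - 27875/100000) * (a * a) \<le> 3 * a + 1"
      using hyp by (simp add: algebra_simps power2_eq_square)
    moreover have "(4 - 27875/100000) * (10605/10000 * a) \<le> (4 - 27875/100000) * (a * a)"
      using big a1 by (intro mult_left_mono mult_right_mono) auto
    ultimately have "(4 - 27875/100000) * (10605/10000 * a) \<le> 3 * a + 1" by linarith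
    then show False using big by simp
  qed
  have "(a - 1) * p \<le> (a - 1) * (p + 1)" using a1 by simp
  also have "\<dots> \<le> 27875/100000 * a^2" by (rule hyp)
  also have "\<dots> \<le> 27875/100000 * (10605/10000)^2"
    using a_le a1 by (intro mult_left_mono power_mono) auto
  finally show "(a - 1) * p < 1" by (simp add: power2_eq_square)
qed

lemma hg_series_half_lt_two:
  assumes a0: "a > 0" and p4: "p \<ge> 4 * a"
    and hyp: "(a - 1) / (a^2 / (p + 1)) \<le> 1 - 1 / (2 * ln 2)"
  shows "hg_series a p (1/2) < 2"
proof (cases "a \<le> 1")
  case True
  then show ?thesis using hg_series_half_lt_two_small_a a0 p4 by simp
next
  case False
  then have a1: "a > 1" and p0: "p > 0" using a0 p4 by auto
  have "(a - 1) * (p + 1) / a^2 \<le> 1 - 1 / (2 * ln 2)" using hyp p0 by simp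
  also have "\<dots> \<le> 27875/100000" by (rule c0_le_rational)
  finally have "(a - 1) * (p + 1) / a^2 \<le> 27875/100000" .
  then have hyp': "(a - 1) * (p + 1) \<le> 27875/100000 * a^2"
    using a0 by (simp add: divide_le_eq mult.commute)
  note bounds = part1_parameter_bounds[OF a1 p4 hyp']
  show ?thesis
  proof (cases "p \<ge> 20")
    case True
    have "hg_series a p (1/2) < tail_bound a p 5"
      using a0 p0 bounds by (intro hg_series_half_lt_tail_bound) auto
    also have "\<dots> \<le> 2" using tail_bound_large_p[OF a1 bounds(1) True hyp'] .
    finally show ?thesis .
  next
    case False
    have "hg_series a p (1/2) < tail_bound a p 8"
      using a0 p0 bounds by (intro hg_series_half_lt_tail_bound) auto
    also have "\<dots> < 2" using tail_bound_small_p[OF a1 bounds(1) p0 _ hyp'] False by simp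
    finally show ?thesis .
  qed
qed

lemma four_harmonic_mean_le_sum:
  fixes c d :: real assumes "c > 0" "d > 0"
  shows "4 * (c * d / (c + d)) \<le> c + d"
proof -
  have "4 * (c * d) \<le> (c + d)^2"
    using zero_le_power2[of "c - d"] by (simp add: power2_eq_square algebra_simps)
  then show ?thesis using assms by (simp add: divide_le_eq power2_eq_square)
qed

theorem mainTheorem6:
  fixes c d a b \<beta> :: real
  assumes "c > 0" and "d > 0"
    and "0 < a" and "a < 1" and "1 < b"
    and "\<beta> \<in> {0<..<1}" and "beta_eq c d a b \<beta>"
    and "\<forall>x\<in>{0<..<1}. beta_eq c d a b x \<longrightarrow> x = \<beta>"
  shows "let a0 = c * d / (c + d); h = a0^2 / (c + d + 1);
             c0 = 1 - 1 / (2 * ln 2); c1 = 1 / ln 2 - 1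
         in ((a0 - 1) / h \<le> c0 \<longrightarrow> \<beta> > 1/2) \<and> ((a0 - 1) / h \<ge> c1 \<longrightarrow> \<beta> < 1/2)"
proof -
  define a0 where "a0 = c * d / (c + d)"
  have a0: "a0 > 0" unfolding a0_def using assms(1,2) by simp
  have p4: "4 * a0 \<le> c + d" unfolding a0_def using four_harmonic_mean_le_sum assms(1,2) .
  have b0: "0 < b" using assms(5) by simp
  have "\<beta> > 1/2" if "(a0 - 1) / (a0^2 / (c + d + 1)) \<le> 1 - 1 / (2 * ln 2)"
    using beta_gt_half[OF assms(1-3) b0 assms(6,7)] hg_series_half_lt_two[OF a0 p4] that
    unfolding a0_def by simp
  moreover have "\<beta> < 1/2" if "(a0 - 1) / (a0^2 / (c + d + 1)) \<ge> 1 / ln 2 - 1"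
    using beta_lt_half[OF assms(1-3) b0 assms(6,7)] hg_series_half_gt_two[of a0 "c + d"] a0 assms(1,2) that
    unfolding a0_def by simp
  ultimately show ?thesis unfolding Let_def a0_def by blast
qed

end
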